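(* For every polynomial knot $\phi:\mathbb R\to\mathbb R^3$ there exist a nonzero vector $v\in\mathbb R^3$ and a smooth map $F:[0,1]\times\mathbb R\to\mathbb R^3$ such that for every $s\in[0,1]$ the map $F_s=F(s,\cdot)$ is a polynomial knot, $F_0(t)=tv$ for all $t\in\mathbb R$, and $F_1=\phi$.
   Context: A polynomial knot is a map $\phi:\mathbb R\to\mathbb R^3$ whose components are real polynomials and which is a smooth embedding, i.e. $\phi$ is injective and $\phi'(t)\ne0$ for all $t\in\mathbb R$. *)

theory Defs
  imports "HOL-Analysis.Analysis" "HOL-Computational_Algebra.Polynomial"
begin

definition polynomial_knot :: "(real \<Rightarrow> real^3) \<Rightarrow> bool" where
  "polynomial_knot \<phi> \<longleftrightarrow>
     (\<forall>i. \<exists>p :: real poly. \<forall>t. \<phi> t $ i = poly p t) \<and>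
     inj \<phi> \<and>
     (\<forall>t. \<phi> differentiable (at t) \<and> vector_derivative \<phi> (at t) \<noteq> 0)"

text \<open>For a finite-dimensional
  domain this is exactly: all partial derivatives of all orders exist and are continuous.\<close>
definition smooth_on :: "'a::real_normed_vector set \<Rightarrow> ('a \<Rightarrow> 'b::real_normed_vector) \<Rightarrow> bool" where
  "smooth_on S f \<longleftrightarrow>
     (\<exists>\<F>. f \<in> \<F> \<and>
        (\<forall>g\<in>\<F>. continuous_on S g \<and>
           (\<exists>g'. (\<forall>x\<in>S. (g has_derivative g' x) (at x within S)) \<and>
                 (\<forall>v. (\<lambda>x. g' x v) \<in> \<F>))))"

end

theory Submission imports Defs begin

text \<open>Write \<open>\<phi>(t) = \<phi>(0) + t \<psi>(t)\<close> with \<open>\<psi>\<close> a polynomial and put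
  \<open>F(s, t) = s \<phi>(0) + t \<psi>(s t)\<close>. For \<open>s \<noteq> 0\<close> this is \<open>s \<phi>(0) + (\<phi>(s t) - \<phi>(0)) / s\<close>,
  a rescaled reparametrisation of \<open>\<phi>\<close>, hence injective; at \<open>s = 0\<close> it is the tangent line
  \<open>t \<phi>'(0)\<close>. In every case \<open>\<partial>\<^sub>t F(s, t) = \<phi>'(s t) \<noteq> 0\<close>, and \<open>F\<close> is a polynomial in
  \<open>(s, t)\<close>, hence smooth.\<close>

inductive_set bivariate_polyfun :: "(real \<times> real \<Rightarrow> real) set" where
  const: "(\<lambda>x. c) \<in> bivariate_polyfun"
| fst: "fst \<in> bivariate_polyfun"
| snd: "snd \<in> bivariate_polyfun"
| add: "f \<in> bivariate_polyfun \<Longrightarrow> g \<in> bivariate_polyfun \<Longrightarrow> (\<lambda>x. f x + g x) \<in> bivariate_polyfun"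
| mult: "f \<in> bivariate_polyfun \<Longrightarrow> g \<in> bivariate_polyfun \<Longrightarrow> (\<lambda>x. f x * g x) \<in> bivariate_polyfun"

lemma bivariate_polyfun_poly:
  "f \<in> bivariate_polyfun \<Longrightarrow> (\<lambda>x. poly q (f x)) \<in> bivariate_polyfun"
  by (induction q) (auto intro!: bivariate_polyfun.intros)

lemma bivariate_polyfun_has_derivative:
  assumes "f \<in> bivariate_polyfun"
  shows "\<exists>D. (\<forall>x. (f has_derivative D x) (at x)) \<and> (\<forall>v. (\<lambda>x. D x v) \<in> bivariate_polyfun)"
  using assms
proof induction
  case (const c)
  show ?case
    by (rule exI[of _ "\<lambda>x h. 0"]) (auto intro: bivariate_polyfun.intros)
next
  case fst
  show ?case
    by (rule exI[of _ "\<lambda>x. fst"]) (auto intro: bivariate_polyfun.intros has_derivative_fst)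
next
  case snd
  show ?case
    by (rule exI[of _ "\<lambda>x. snd"]) (auto intro: bivariate_polyfun.intros has_derivative_snd)
next
  case (add f g)
  then obtain Df Dg where
    Df: "\<And>x. (f has_derivative Df x) (at x)" "\<And>v. (\<lambda>x. Df x v) \<in> bivariate_polyfun" and
    Dg: "\<And>x. (g has_derivative Dg x) (at x)" "\<And>v. (\<lambda>x. Dg x v) \<in> bivariate_polyfun"
    by metis
  have "((\<lambda>x. f x + g x) has_derivative (\<lambda>h. Df x h + Dg x h)) (at x)" for x
    using Df(1) Dg(1) by (rule has_derivative_add)
  moreover have "(\<lambda>x. Df x v + Dg x v) \<in> bivariate_polyfun" for v
    using Df(2) Dg(2) by (rule bivariate_polyfun.add)
  ultimately show ?case
    by (intro exI[of _ "\<lambda>x h. Df x h + Dg x h"]) blast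
next
  case (mult f g)
  then obtain Df Dg where
    Df: "\<And>x. (f has_derivative Df x) (at x)" "\<And>v. (\<lambda>x. Df x v) \<in> bivariate_polyfun" and
    Dg: "\<And>x. (g has_derivative Dg x) (at x)" "\<And>v. (\<lambda>x. Dg x v) \<in> bivariate_polyfun"
    by metis
  have "((\<lambda>x. f x * g x) has_derivative (\<lambda>h. f x * Dg x h + Df x h * g x)) (at x)" for x
    using Df(1) Dg(1) by (rule has_derivative_mult)
  moreover have "(\<lambda>x. f x * Dg x v + Df x v * g x) \<in> bivariate_polyfun" for v
    using mult.hyps Df(2) Dg(2) by (intro bivariate_polyfun.add bivariate_polyfun.mult)
  ultimately show ?case
    by (intro exI[of _ "\<lambda>x h. f x * Dg x h + Df x h * g x"]) blast
qed

lemma has_derivative_vec_lambda: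
  fixes f :: "'n::finite \<Rightarrow> 'a::real_normed_vector \<Rightarrow> real"
  assumes "\<And>i. (f i has_derivative f' i) (at a within S)"
  shows "((\<lambda>x. \<chi> i. f i x) has_derivative (\<lambda>h. \<chi> i. f' i h)) (at a within S)"
proof (rule has_derivative_componentwise_within[THEN iffD2], rule ballI)
  fix b :: "real^'n" assume "b \<in> Basis"
  then obtain j where j: "b = axis j 1"
    by (auto simp: Basis_vec_def)
  show "((\<lambda>x. (\<chi> i. f i x) \<bullet> b) has_derivative (\<lambda>h. (\<chi> i. f' i h) \<bullet> b)) (at a within S)"
    unfolding j cart_eq_inner_axis[symmetric] using assms by simp
qed

lemma has_vector_derivative_vec_lambda:
  fixes f :: "'n::finite \<Rightarrow> real \<Rightarrow> real"
  assumes "\<And>i. (f i has_real_derivative d i) (at x within S)"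
  shows "((\<lambda>t. \<chi> i. f i t) has_vector_derivative (\<chi> i. d i)) (at x within S)"
proof -
  have "(\<lambda>h. h *\<^sub>R (\<chi> i. d i)) = (\<lambda>h. \<chi> i. d i * h)"
    by (simp add: fun_eq_iff vec_eq_iff)
  then show ?thesis
    unfolding has_vector_derivative_def using assms
    by (simp add: has_derivative_vec_lambda has_field_derivative_def)
qed

lemma smooth_on_bivariate_polyfun:
  fixes F :: "real \<times> real \<Rightarrow> real^'n::finite"
  assumes "\<And>i. (\<lambda>x. F x $ i) \<in> bivariate_polyfun"
  shows "smooth_on S F"
  unfolding smooth_on_def
proof (intro exI[of _ "{g. \<forall>i. (\<lambda>x. g x $ i) \<in> bivariate_polyfun}"] conjI ballI)
  show "F \<in> {g. \<forall>i. (\<lambda>x. g x $ i) \<in> bivariate_polyfun}"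
    using assms by blast
  fix g :: "real \<times> real \<Rightarrow> real^'n"
  assume "g \<in> {g. \<forall>i. (\<lambda>x. g x $ i) \<in> bivariate_polyfun}"
  then have "\<forall>i. \<exists>D. (\<forall>x. ((\<lambda>x. g x $ i) has_derivative D x) (at x)) \<and>
                   (\<forall>v. (\<lambda>x. D x v) \<in> bivariate_polyfun)"
    using bivariate_polyfun_has_derivative by blast
  then obtain D where
    D: "\<And>i x. ((\<lambda>x. g x $ i) has_derivative D i x) (at x)"
       "\<And>i v. (\<lambda>x. D i x v) \<in> bivariate_polyfun"
    by metis
  have g': "(g has_derivative (\<lambda>h. \<chi> i. D i x h)) (at x within S)" for x
    using has_derivative_vec_lambda[of "\<lambda>i x. g x $ i", OF has_derivative_at_withinI[OF D(1)]]
    by simp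
  show "continuous_on S g"
    by (rule has_derivative_continuous_on) (rule g')
  show "\<exists>g'. (\<forall>x\<in>S. (g has_derivative g' x) (at x within S)) \<and>
          (\<forall>v. (\<lambda>x. g' x v) \<in> {g. \<forall>i. (\<lambda>x. g x $ i) \<in> bivariate_polyfun})"
    by (rule exI[of _ "\<lambda>x h. \<chi> i. D i x h"]) (simp add: g' D)
qed

lemma poly_synthetic_div_0: "poly p x = poly p 0 + x * poly (synthetic_div p 0) x"
  using arg_cong[OF synthetic_div_correct[of p 0], of "\<lambda>q. poly q x"] by simp

lemma poly_pderiv_synthetic_div_0:
  "poly (pderiv p) x = poly (synthetic_div p 0) x + x * poly (pderiv (synthetic_div p 0)) x"
  using arg_cong[OF synthetic_div_correct[of p 0], of "\<lambda>q. poly (pderiv q) x"]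
  by (simp add: pderiv_pCons)

definition poly_vec :: "('n::finite \<Rightarrow> real poly) \<Rightarrow> real \<Rightarrow> real^'n" where
  "poly_vec P t = (\<chi> i. poly (P i) t)"

lemma has_vector_derivative_poly_vec:
  "(poly_vec P has_vector_derivative poly_vec (\<lambda>i. pderiv (P i)) t) (at t)"
  unfolding poly_vec_def by (intro has_vector_derivative_vec_lambda poly_DERIV)

lemma vector_derivative_poly_vec:
  "vector_derivative (poly_vec P) (at t) = poly_vec (\<lambda>i. pderiv (P i)) t"
  by (rule vector_derivative_at[OF has_vector_derivative_poly_vec])

lemma polynomial_knot_obtain_poly_vec:
  assumes "polynomial_knot \<phi>"
  obtains P where "\<phi> = poly_vec P"
proof -
  from assms have "\<forall>i. \<exists>p. \<forall>t. \<phi> t $ i = poly p t"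
    by (simp add: polynomial_knot_def)
  then obtain P where "\<And>i t. \<phi> t $ i = poly (P i) t"
    by metis
  then have "\<phi> = poly_vec P"
    by (simp add: fun_eq_iff vec_eq_iff poly_vec_def)
  then show thesis ..
qed

definition knot_homotopy :: "('n::finite \<Rightarrow> real poly) \<Rightarrow> real \<times> real \<Rightarrow> real^'n" where
  "knot_homotopy P = (\<lambda>(s, t). \<chi> i. s * poly (P i) 0 + t * poly (synthetic_div (P i) 0) (s * t))"

lemma knot_homotopy_nth:
  "knot_homotopy P (s, t) $ i = s * poly (P i) 0 + t * poly (synthetic_div (P i) 0) (s * t)"
  by (simp add: knot_homotopy_def)

lemma knot_homotopy_one: "knot_homotopy P (1, t) = poly_vec P t"
proof (unfold vec_eq_iff, rule allI)
  fix i
  show "knot_homotopy P (1, t) $ i = poly_vec P t $ i"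
    using poly_synthetic_div_0[of "P i" t] by (simp add: knot_homotopy_nth poly_vec_def)
qed

lemma knot_homotopy_zero:
  "knot_homotopy P (0, t) = t *\<^sub>R poly_vec (\<lambda>i. pderiv (P i)) 0"
proof (unfold vec_eq_iff, rule allI)
  fix i
  show "knot_homotopy P (0, t) $ i = (t *\<^sub>R poly_vec (\<lambda>i. pderiv (P i)) 0) $ i"
    using poly_pderiv_synthetic_div_0[of "P i" 0] by (simp add: knot_homotopy_nth poly_vec_def)
qed

lemma scaleR_knot_homotopy:
  "s *\<^sub>R knot_homotopy P (s, t) = poly_vec P (s * t) + (s\<^sup>2 - 1) *\<^sub>R poly_vec P 0"
proof (unfold vec_eq_iff, rule allI)
  fix i
  show "(s *\<^sub>R knot_homotopy P (s, t)) $ i = (poly_vec P (s * t) + (s\<^sup>2 - 1) *\<^sub>R poly_vec P 0) $ i"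
    using poly_synthetic_div_0[of "P i" "s * t"]
    by (simp add: knot_homotopy_nth poly_vec_def algebra_simps power2_eq_square)
qed

lemma has_vector_derivative_knot_homotopy:
  "((\<lambda>t. knot_homotopy P (s, t)) has_vector_derivative poly_vec (\<lambda>i. pderiv (P i)) (s * t)) (at t)"
proof -
  have "((\<lambda>t. s * poly (P i) 0 + t * poly (synthetic_div (P i) 0) (s * t)) has_real_derivative
          poly (pderiv (P i)) (s * t)) (at t)" for i
    using poly_pderiv_synthetic_div_0[of "P i" "s * t"]
    by (auto intro!: derivative_eq_intros poly_DERIV simp: algebra_simps)
  then show ?thesis
    unfolding knot_homotopy_def poly_vec_def by (auto intro: has_vector_derivative_vec_lambda)
qed

lemma knot_homotopy_nth_poly:
  "knot_homotopy P (s, t) $ i = poly (pCons (s * poly (P i) 0) (pcompose (synthetic_div (P i) 0) [:0, s:])) t"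
  by (simp add: knot_homotopy_nth poly_pcompose algebra_simps)

lemma smooth_on_knot_homotopy: "smooth_on S (knot_homotopy P)"
proof (rule smooth_on_bivariate_polyfun)
  fix i
  have "(\<lambda>x. knot_homotopy P x $ i) =
        (\<lambda>x. fst x * poly (P i) 0 + snd x * poly (synthetic_div (P i) 0) (fst x * snd x))"
    by (auto simp: fun_eq_iff knot_homotopy_nth)
  also have "\<dots> \<in> bivariate_polyfun"
    by (intro bivariate_polyfun.intros bivariate_polyfun_poly)
  finally show "(\<lambda>x. knot_homotopy P x $ i) \<in> bivariate_polyfun" .
qed

lemma inj_knot_homotopy:
  assumes "inj (poly_vec P)" and "poly_vec (\<lambda>i. pderiv (P i)) 0 \<noteq> 0"
  shows "inj (\<lambda>t. knot_homotopy P (s, t))"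
proof (cases "s = 0")
  case True
  with assms(2) show ?thesis
    by (auto simp: inj_on_def knot_homotopy_zero)
next
  case False
  show ?thesis
  proof (rule injI)
    fix t1 t2
    assume "knot_homotopy P (s, t1) = knot_homotopy P (s, t2)"
    then have "s *\<^sub>R knot_homotopy P (s, t1) = s *\<^sub>R knot_homotopy P (s, t2)"
      by simp
    then have "poly_vec P (s * t1) = poly_vec P (s * t2)"
      by (simp add: scaleR_knot_homotopy)
    with assms(1) False show "t1 = t2"
      by (auto dest: injD)
  qed
qed

lemma polynomial_knot_knot_homotopy:
  assumes "polynomial_knot (poly_vec P)"
  shows "polynomial_knot (\<lambda>t. knot_homotopy P (s, t))"
  unfolding polynomial_knot_def
proof (intro conjI allI)
  have regular: "poly_vec (\<lambda>i. pderiv (P i)) t \<noteq> 0" for t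
    using assms by (simp add: polynomial_knot_def vector_derivative_poly_vec)
  show "inj (\<lambda>t. knot_homotopy P (s, t))"
    using assms regular by (intro inj_knot_homotopy) (auto simp: polynomial_knot_def)
  fix t
  show "(\<lambda>t. knot_homotopy P (s, t)) differentiable at t"
    using has_vector_derivative_knot_homotopy by (rule differentiableI_vector)
  show "vector_derivative (\<lambda>t. knot_homotopy P (s, t)) (at t) \<noteq> 0"
    using regular by (simp add: vector_derivative_at[OF has_vector_derivative_knot_homotopy])
next
  fix i
  show "\<exists>p. \<forall>t. knot_homotopy P (s, t) $ i = poly p t"
    using knot_homotopy_nth_poly by blast
qed

theorem mainTheorem7:
  fixes \<phi> :: "real \<Rightarrow> real^3"
  assumes "polynomial_knot \<phi>"
  shows "\<exists>v :: real^3. v \<noteq> 0 \<and>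
           (\<exists>F :: real \<times> real \<Rightarrow> real^3.
              smooth_on ({0..1} \<times> UNIV) F \<and>
              (\<forall>s\<in>{0..1}. polynomial_knot (\<lambda>t. F (s, t))) \<and>
              (\<forall>t. F (0, t) = t *\<^sub>R v) \<and>
              (\<forall>t. F (1, t) = \<phi> t))"
proof -
  obtain P where \<phi>: "\<phi> = poly_vec P"
    using assms by (rule polynomial_knot_obtain_poly_vec)
  have "poly_vec (\<lambda>i. pderiv (P i)) 0 \<noteq> 0"
    using assms by (simp add: \<phi> polynomial_knot_def vector_derivative_poly_vec)
  moreover have "polynomial_knot (\<lambda>t. knot_homotopy P (s, t))" for s
    using assms unfolding \<phi> by (rule polynomial_knot_knot_homotopy)
  ultimately show ?thesis
    by (intro exI[of _ "poly_vec (\<lambda>i. pderiv (P i)) 0"] conjI exI[of _ "knot_homotopy P"])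
       (simp_all add: \<phi> smooth_on_knot_homotopy knot_homotopy_zero knot_homotopy_one)
qed

end
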